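(* Let $k$ be a field of characteristic $0$ and $t$ transcendental over $k$. Let $m=\frac{at^2+bt+c}{dt^2+et+f}$ with $a,b,c,d,e,f\in k$, $a,d$ not both zero, $ae=bd$, $af\neq cd$, $b^2\neq 4ac$ and $e^2\neq 4df$. Then $[k(t):k(m)]=2$ and $\sqrt{m}\notin k(t)$. *)

theory Defs
  imports "HOL-Algebra.Algebraic_Closure_Type" "HOL-Algebra.Generated_Fields"
begin

text \<open>The rational function field k(t) is modelled as the fraction field
  \<open>'a poly fract\<close> of the polynomial ring k[t], where k is the type \<open>'a\<close>.\<close>

type_synonym 'a ratfun = "'a poly fract"

definition ratfun_var :: "'a::field ratfun" where
  "ratfun_var = Fract [:0, 1:] 1"

definition ratfun_const :: "'a::field \<Rightarrow> 'a ratfun" where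
  "ratfun_const c = Fract [:c:] 1"

abbreviation ratfun_ring :: "'a::field ratfun ring" where
  "ratfun_ring \<equiv> ring_of_type_algebra"

definition subfield_gen :: "'a::field ratfun \<Rightarrow> 'a ratfun set" where
  "subfield_gen m = generate_field ratfun_ring (insert m (range ratfun_const))"

end

(*
  Since ae = bd, numerator and denominator are quadratics in the same element
  u = t^2 + \<beta>t (\<beta> = b/a), so m = (au + c)/(du + f) is a Moebius transform of u,
  invertible because af \<noteq> cd; hence k(m) = k(u). The reflection t \<mapsto> -\<beta> - t fixes u
  but not t, so t \<notin> k(u), while t^2 + \<beta>t = u gives k(t) = k(u) + k(u)t: the degree is 2.
  If m were a square in k(t), then the product of its numerator and denominator would be
  a square in k[t], k[t] being factorial. Shifting t \<mapsto> t - \<beta>/2 turns this into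
  (at^2 + c')(dt^2 + f') = W^2, and comparing coefficients forces af' = c'd, i.e. af = cd.
*)

theory Submission
  imports Defs "HOL-Computational_Algebra.Polynomial_Factorial"
begin

lemma Fract_power: "Fract (a::'a::idom) b ^ n = Fract (a ^ n) (b ^ n)"
  by (induction n) (simp_all add: One_fract_def)

lemma field_poly_prime_divisor_exists:
  fixes B :: "'a::field poly"
  assumes "B \<noteq> 0" "\<not> is_unit B"
  shows "\<exists>p. prime_elem p \<and> p dvd B"
  using assms
proof (induction "degree B" arbitrary: B rule: less_induct)
  case less
  show ?case
  proof (cases "irreducible B")
    case True
    then show ?thesis by (intro exI[of _ B]) (simp add: field_poly_irreducible_imp_prime)
  next
    case False
    then obtain x y where xy: "B = x * y" "\<not> is_unit x" "\<not> is_unit y"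
      using less.prems by (auto simp: irreducible_def)
    then have "x \<noteq> 0" "y \<noteq> 0" using less.prems(1) by auto
    then have "degree y \<noteq> 0" using xy(3) by (auto simp: is_unit_iff_degree)
    then have "degree x < degree B" using xy(1) less.prems(1) by (simp add: degree_mult_eq)
    then obtain p where "prime_elem p" "p dvd x" using less.hyps \<open>x \<noteq> 0\<close> xy(2) by blast
    then show ?thesis using xy(1) by auto
  qed
qed

lemma poly_power_eq_mult_power_imp_power:
  fixes A B P :: "'a::field poly"
  assumes "B \<noteq> 0" "A ^ n = P * B ^ n" "n > 0"
  shows "\<exists>W. W ^ n = P"
  using assms(1,2)
proof (induction "degree B" arbitrary: A B rule: less_induct)
  case less
  show ?case
  proof (cases "is_unit B")
    case True
    then have "(A div B) ^ n * B ^ n = P * B ^ n"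
      using less.prems(2) by (simp flip: power_mult_distrib)
    then have "(A div B) ^ n = P" using less.prems(1) by simp
    then show ?thesis by blast
  next
    case False
    then obtain p where "p dvd B" and p: "prime_elem p"
      using field_poly_prime_divisor_exists less.prems(1) by blast
    then obtain B' where B': "B = p * B'" by blast
    have "p dvd A ^ n" unfolding less.prems(2) B' using \<open>n > 0\<close>
      by (simp add: power_mult_distrib)
    then obtain A' where A': "A = p * A'" using p prime_elem_dvd_power by blast
    have "p \<noteq> 0" "B' \<noteq> 0" using p less.prems(1) B' by auto
    have "p ^ n * A' ^ n = p ^ n * (P * B' ^ n)"
      using less.prems(2) by (simp add: A' B' power_mult_distrib mult_ac)
    then have "A' ^ n = P * B' ^ n" using \<open>p \<noteq> 0\<close> by simp
    moreover have "degree p \<noteq> 0"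
      using prime_elem_not_unit[OF p] \<open>p \<noteq> 0\<close> by (simp add: is_unit_iff_degree)
    then have "degree B' < degree B"
      using \<open>p \<noteq> 0\<close> \<open>B' \<noteq> 0\<close> by (simp add: B' degree_mult_eq)
    ultimately show ?thesis using less.hyps \<open>B' \<noteq> 0\<close> by blast
  qed
qed

lemma ratfun_power_eq_poly_imp_poly_power:
  fixes y :: "'a::field ratfun"
  assumes "y ^ n = Fract P 1" "n > 0"
  shows "\<exists>W. W ^ n = P"
proof -
  obtain A B where y: "y = Fract A B" "B \<noteq> 0" by (cases y)
  then have "A ^ n = P * B ^ n" using assms(1) by (simp add: Fract_power eq_fract)
  then show ?thesis using poly_power_eq_mult_power_imp_power y(2) assms(2) by blast
qed

lemma degree_2_poly_eq:
  fixes V :: "'a::zero poly"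
  assumes "degree V \<le> 2"
  shows "V = [:coeff V 0, coeff V 1, coeff V 2:]"
proof (rule poly_eqI)
  fix n show "coeff V n = coeff [:coeff V 0, coeff V 1, coeff V 2:] n"
    using assms coeff_eq_0[of V n]
    by (cases n; cases "n - 1"; cases "n - 2") (auto simp: coeff_pCons numeral_2_eq_2)
qed

lemma even_quadratics_product_not_square:
  fixes a c d f :: "'a::field_char_0" and V :: "'a poly"
  assumes "a \<noteq> 0" "d \<noteq> 0" "a * f \<noteq> c * d"
  shows "V ^ 2 \<noteq> [:c, 0, a:] * [:f, 0, d:]"
proof
  assume eq: "V ^ 2 = [:c, 0, a:] * [:f, 0, d:]"
  then have "degree (V ^ 2) = 4" using assms by (simp add: degree_mult_eq)
  then have "degree V = 2" using degree_power_eq[of V 2] by (cases "V = 0") auto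
  then obtain r0 r1 r2 where "V = [:r0, r1, r2:]" using degree_2_poly_eq[of V] by auto
  with eq have E: "r0 * r0 = c * f" "2 * r0 * r1 = 0" "2 * r0 * r2 + r1 * r1 = c * d + a * f"
      "2 * r1 * r2 = 0" "r2 * r2 = a * d"
    by (simp_all add: power2_eq_square algebra_simps)
  have "r1 = 0" using E(4,5) assms(1,2) by auto
  then have "c * d + a * f = 2 * r0 * r2" using E(3) by simp
  then have "(c * d + a * f) ^ 2 = 4 * (r0 * r0) * (r2 * r2)"
    by (simp add: power2_eq_square algebra_simps)
  also have "\<dots> = 4 * (c * f) * (a * d)" using E(1,5) by simp
  finally have "(a * f - c * d) ^ 2 = 0" by (simp add: power2_eq_square algebra_simps)
  then show False using assms(3) by simp
qed

lemma pcompose_quadratic_shift: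
  fixes a \<beta> c :: "'a::field_char_0"
  shows "pcompose [:c, a * \<beta>, a:] [:- \<beta> / 2, 1:] = [:c - a * \<beta> ^ 2 / 4, 0, a:]"
  by (simp add: pcompose_pCons algebra_simps power2_eq_square)

lemma quadratics_same_axis_product_not_square:
  fixes a \<beta> c d f :: "'a::field_char_0" and W :: "'a poly"
  assumes "a \<noteq> 0" "d \<noteq> 0" "a * f \<noteq> c * d"
  shows "W ^ 2 \<noteq> [:c, a * \<beta>, a:] * [:f, d * \<beta>, d:]"
proof
  define h where "h = [:- \<beta> / 2, 1:]"
  assume "W ^ 2 = [:c, a * \<beta>, a:] * [:f, d * \<beta>, d:]"
  then have "pcompose W h ^ 2 = pcompose [:c, a * \<beta>, a:] h * pcompose [:f, d * \<beta>, d:] h"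
    by (simp add: power2_eq_square pcompose_mult flip: pcompose_mult)
  also have "\<dots> = [:c - a * \<beta> ^ 2 / 4, 0, a:] * [:f - d * \<beta> ^ 2 / 4, 0, d:]"
    unfolding h_def pcompose_quadratic_shift ..
  finally have square:
    "pcompose W h ^ 2 = [:c - a * \<beta> ^ 2 / 4, 0, a:] * [:f - d * \<beta> ^ 2 / 4, 0, d:]" .
  have "a * (f - d * \<beta> ^ 2 / 4) \<noteq> (c - a * \<beta> ^ 2 / 4) * d"
    using assms(3) by (simp add: algebra_simps)
  from even_quadratics_product_not_square[OF assms(1,2) this] square show False by blast
qed

lemma ratfun_square_eq_Fract_imp_poly_square:
  fixes y :: "'a::field ratfun"
  assumes "y ^ 2 = Fract N D" "D \<noteq> 0"
  shows "\<exists>W. W ^ 2 = N * D"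
proof -
  have "(y * Fract D 1) ^ 2 = Fract N D * Fract (D ^ 2) 1"
    using assms(1) by (simp add: power_mult_distrib Fract_power)
  also have "\<dots> = Fract (N * D) 1"
    using assms(2) by (simp add: eq_fract power2_eq_square)
  finally show ?thesis by (rule ratfun_power_eq_poly_imp_poly_power) simp
qed

lemma ratfun_const_mult: "ratfun_const (x * y) = ratfun_const x * ratfun_const (y::'a::field)"
  by (simp add: ratfun_const_def mult.commute)

lemma ratfun_const_inject: "ratfun_const x = ratfun_const y \<longleftrightarrow> x = (y::'a::field)"
  by (simp add: ratfun_const_def eq_fract)

lemma ratfun_quadratic_eq_Fract:
  fixes a b c :: "'a::field"
  shows "ratfun_const a * ratfun_var ^ 2 + ratfun_const b * ratfun_var + ratfun_const c
         = Fract [:c, b, a:] 1"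
  by (simp add: ratfun_const_def ratfun_var_def Fract_power power2_eq_square)

lemma ring_of_type_algebra_simps:
  "carrier (ring_of_type_algebra :: 'a::field ring) = UNIV"
  "(\<otimes>\<^bsub>ring_of_type_algebra\<^esub>) = ((*) :: 'a \<Rightarrow> _)"
  "(\<oplus>\<^bsub>ring_of_type_algebra\<^esub>) = ((+) :: 'a \<Rightarrow> _)"
  "\<one>\<^bsub>ring_of_type_algebra\<^esub> = (1::'a)"
  "\<zero>\<^bsub>ring_of_type_algebra\<^esub> = (0::'a)"
  by (auto simp: ring_of_type_algebra_def)

lemma ring_of_type_algebra_a_inv: "\<ominus>\<^bsub>ring_of_type_algebra\<^esub> x = - (x::'a::field)"
proof -
  interpret field "ring_of_type_algebra :: 'a ring" by rule
  show ?thesis by (rule minus_equality) (auto simp: ring_of_type_algebra_simps)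
qed

lemma ring_of_type_algebra_m_inv:
  "(x::'a::field) \<noteq> 0 \<Longrightarrow> inv\<^bsub>ring_of_type_algebra\<^esub> x = inverse x"
proof -
  interpret field "ring_of_type_algebra :: 'a ring" by rule
  assume "x \<noteq> 0"
  then show ?thesis by (intro comm_inv_char) (auto simp: ring_of_type_algebra_simps)
qed

lemma subfield_ring_of_type_algebraI:
  fixes K :: "'a::field set"
  assumes "1 \<in> K" "\<And>x y. x \<in> K \<Longrightarrow> y \<in> K \<Longrightarrow> x - y \<in> K"
    "\<And>x y. x \<in> K \<Longrightarrow> y \<in> K \<Longrightarrow> x * y \<in> K"
    "\<And>x. x \<in> K \<Longrightarrow> x \<noteq> 0 \<Longrightarrow> inverse x \<in> K"
  shows "subfield K ring_of_type_algebra"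
proof -
  interpret field "ring_of_type_algebra :: 'a ring" by rule
  have uminus: "- x \<in> K" if "x \<in> K" for x
    using assms(2)[OF assms(1) assms(1)] assms(2)[OF _ that] by fastforce
  have "x + y \<in> K" if "x \<in> K" "y \<in> K" for x y
    using assms(2)[OF that(1) uminus[OF that(2)]] by simp
  with assms uminus show ?thesis
    by (intro subfieldI' subringI)
       (auto simp: ring_of_type_algebra_simps ring_of_type_algebra_a_inv ring_of_type_algebra_m_inv)
qed

lemma subfield_ring_of_type_algebraD:
  fixes K :: "'a::field set"
  assumes "subfield K ring_of_type_algebra"
  shows "0 \<in> K" "1 \<in> K" "x \<in> K \<Longrightarrow> - x \<in> K" "x \<in> K \<Longrightarrow> y \<in> K \<Longrightarrow> x + y \<in> K"
    "x \<in> K \<Longrightarrow> y \<in> K \<Longrightarrow> x - y \<in> K" "x \<in> K \<Longrightarrow> y \<in> K \<Longrightarrow> x * y \<in> K"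
    "x \<in> K \<Longrightarrow> y \<in> K \<Longrightarrow> x / y \<in> K"
proof -
  interpret field "ring_of_type_algebra :: 'a ring" by rule
  note subring = subringE[OF subfieldE(1)[OF assms], unfolded ring_of_type_algebra_simps]
  show "0 \<in> K" "1 \<in> K" using subring(2,3) .
  show uminus: "- x \<in> K" if "x \<in> K" for x
    using subring(5)[OF that] by (simp add: ring_of_type_algebra_a_inv)
  show "x \<in> K \<Longrightarrow> y \<in> K \<Longrightarrow> x * y \<in> K" by (rule subring(6))
  show "x \<in> K \<Longrightarrow> y \<in> K \<Longrightarrow> x + y \<in> K" by (rule subring(7))
  show "x \<in> K \<Longrightarrow> y \<in> K \<Longrightarrow> x - y \<in> K" using subring(7) uminus by force
  have "inverse y \<in> K" if "y \<in> K" "y \<noteq> 0" for y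
    using subfield_m_inv(1)[OF assms, of y] that
    by (simp add: ring_of_type_algebra_m_inv ring_of_type_algebra_simps)
  then show "x \<in> K \<Longrightarrow> y \<in> K \<Longrightarrow> x / y \<in> K"
    using subring(6) \<open>0 \<in> K\<close> by (cases "y = 0") (auto simp: divide_inverse)
qed

lemma subfield_subfield_gen: "subfield (subfield_gen m) ratfun_ring"
  unfolding subfield_gen_def
  by (rule field.generate_field_is_subfield) (auto simp: ring_of_type_algebra_simps)

lemma subfield_gen_incl: "m \<in> subfield_gen m" "ratfun_const c \<in> subfield_gen m"
  unfolding subfield_gen_def by (auto intro: generate_field.incl)

lemma linear_fractional_in_subfield_gen:
  fixes a c d f :: "'a::field"
  assumes "m = (ratfun_const a * u + ratfun_const c) / (ratfun_const d * u + ratfun_const f)"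
    and "ratfun_const d * u + ratfun_const f \<noteq> 0" and "a * f \<noteq> c * d"
  shows "u \<in> subfield_gen m"
proof -
  let ?C = ratfun_const
  have eq: "m * (?C d * u + ?C f) = ?C a * u + ?C c" using assms(1,2) by simp
  have "?C d * m - ?C a \<noteq> 0"
  proof
    assume "?C d * m - ?C a = 0"
    then have "?C d * (?C a * u + ?C c) = ?C a * (?C d * u + ?C f)"
      by (simp flip: eq add: mult.assoc)
    then have "?C (c * d) = ?C (a * f)" by (simp add: ratfun_const_mult algebra_simps)
    with assms(3) show False by (simp add: ratfun_const_inject)
  qed
  with eq have "u = (?C c - ?C f * m) / (?C d * m - ?C a)"
    by (simp add: field_simps)
  then show ?thesis
    by (simp add: subfield_gen_incl subfield_ring_of_type_algebraD[OF subfield_subfield_gen])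
qed

text \<open>Fractions with a representation p/q whose numerator and denominator are both invariant
  under t \<mapsto> h. For an involution h this is the fixed field of the automorphism t \<mapsto> h of k(t).\<close>

definition ratfun_fixed :: "'a::field poly \<Rightarrow> 'a ratfun set" where
  "ratfun_fixed h = {Fract p q | p q. q \<noteq> 0 \<and> pcompose p h = p \<and> pcompose q h = q}"

lemma subfield_ratfun_fixed: "subfield (ratfun_fixed h) ratfun_ring"
proof (rule subfield_ring_of_type_algebraI)
  show "1 \<in> ratfun_fixed h"
    unfolding ratfun_fixed_def One_fract_def by (force simp: pcompose_1)
next
  fix x y assume "x \<in> ratfun_fixed h" "y \<in> ratfun_fixed h"
  then obtain p1 q1 p2 q2 where
    x: "x = Fract p1 q1" "q1 \<noteq> 0" "pcompose p1 h = p1" "pcompose q1 h = q1" and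
    y: "y = Fract p2 q2" "q2 \<noteq> 0" "pcompose p2 h = p2" "pcompose q2 h = q2"
    unfolding ratfun_fixed_def by blast
  show "x - y \<in> ratfun_fixed h" unfolding ratfun_fixed_def
    by (rule CollectI, rule exI[of _ "p1 * q2 - p2 * q1"], rule exI[of _ "q1 * q2"])
       (simp add: x y pcompose_diff pcompose_mult)
  show "x * y \<in> ratfun_fixed h" unfolding ratfun_fixed_def
    by (rule CollectI, rule exI[of _ "p1 * p2"], rule exI[of _ "q1 * q2"])
       (simp add: x y pcompose_mult)
next
  fix x assume "x \<in> ratfun_fixed h" "x \<noteq> 0"
  then obtain p q where x: "x = Fract p q" "q \<noteq> 0" "pcompose p h = p" "pcompose q h = q"
    unfolding ratfun_fixed_def by blast
  with \<open>x \<noteq> 0\<close> have "p \<noteq> 0" by (auto simp: Zero_fract_def eq_fract)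
  with x show "inverse x \<in> ratfun_fixed h"
    unfolding ratfun_fixed_def by (intro CollectI exI[of _ q] exI[of _ p]) simp
qed

lemma subfield_gen_subset_ratfun_fixed:
  assumes "m \<in> ratfun_fixed h"
  shows "subfield_gen m \<subseteq> ratfun_fixed h"
proof -
  have "ratfun_const c \<in> ratfun_fixed h" for c
    unfolding ratfun_fixed_def ratfun_const_def by (force simp: pcompose_1)
  with assms show ?thesis
    unfolding subfield_gen_def
    by (intro field.generate_field_min_subfield1 subfield_ratfun_fixed)
       (auto simp: ring_of_type_algebra_simps)
qed

lemma ratfun_var_notin_ratfun_fixed:
  assumes "h \<noteq> [:0, 1:]"
  shows "ratfun_var \<notin> ratfun_fixed h"
proof
  assume "ratfun_var \<in> ratfun_fixed h"
  then obtain p q where "Fract [:0, 1:] 1 = Fract p q" "q \<noteq> 0"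
    and fixed: "pcompose p h = p" "pcompose q h = q"
    unfolding ratfun_fixed_def ratfun_var_def by blast
  then have "p = [:0, 1:] * q" by (simp add: eq_fract)
  then have "h * q = [:0, 1:] * q"
    using fixed by (simp add: pcompose_mult pcompose_pCons)
  with \<open>q \<noteq> 0\<close> have "h = [:0, 1:]" by (rule mult_right_cancel[THEN iffD1])
  with assms show False ..
qed

lemma pcompose_quadratic_reflection:
  fixes a \<beta> c :: "'a::comm_ring_1"
  shows "pcompose [:c, a * \<beta>, a:] [:- \<beta>, - 1:] = [:c, a * \<beta>, a:]"
  by (simp add: pcompose_pCons algebra_simps)

lemma ratfun_poly_in_linear_span:
  assumes K: "subfield K ratfun_ring" "range ratfun_const \<subseteq> K"
    and "s \<in> K" "ratfun_var ^ 2 + s * ratfun_var \<in> K"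
  shows "\<exists>x\<in>K. \<exists>y\<in>K. Fract p 1 = x * ratfun_var + y"
proof (induction p)
  case 0
  show ?case using subfield_ring_of_type_algebraD(1)[OF K(1)] by (force simp: Zero_fract_def)
next
  case (pCons c p)
  let ?t = "ratfun_var :: 'a ratfun"
  from pCons.IH obtain x y where xy: "x \<in> K" "y \<in> K" "Fract p 1 = x * ?t + y" by blast
  have "pCons c p = [:c:] + [:0, 1:] * p" by simp
  then have "Fract (pCons c p) 1 = ratfun_const c + ?t * Fract p 1"
    by (simp add: ratfun_var_def ratfun_const_def)
  also have "\<dots> = (y - x * s) * ?t + (x * (?t ^ 2 + s * ?t) + ratfun_const c)"
    unfolding xy(3) by (simp add: algebra_simps power2_eq_square)
  finally have "Fract (pCons c p) 1 = (y - x * s) * ?t + (x * (?t ^ 2 + s * ?t) + ratfun_const c)" .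
  moreover have "y - x * s \<in> K" "x * (?t ^ 2 + s * ?t) + ratfun_const c \<in> K"
    using xy assms by (auto intro!: subfield_ring_of_type_algebraD[OF K(1)])
  ultimately show ?case by blast
qed

lemma ratfun_in_linear_span:
  assumes K: "subfield K ratfun_ring" "range ratfun_const \<subseteq> K"
    and s: "s \<in> K" and u: "ratfun_var ^ 2 + s * ratfun_var \<in> K" and t: "ratfun_var \<notin> K"
  shows "\<exists>x\<in>K. \<exists>y\<in>K. r = x * ratfun_var + y"
proof -
  let ?t = "ratfun_var :: 'a ratfun"
  define u where "u = ?t ^ 2 + s * ?t"
  note closed = subfield_ring_of_type_algebraD[OF K(1)]
  obtain p q where r: "r = Fract p q" "q \<noteq> 0" by (cases r)
  obtain x1 y1 where p: "x1 \<in> K" "y1 \<in> K" "Fract p 1 = x1 * ?t + y1"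
    using ratfun_poly_in_linear_span[OF K s u] by blast
  obtain x y where q: "x \<in> K" "y \<in> K" "Fract q 1 = x * ?t + y"
    using ratfun_poly_in_linear_span[OF K s u] by blast
  have denom: "x * ?t + y \<noteq> 0" using r(2) by (simp flip: q(3) add: Zero_fract_def eq_fract)
  \<comment> \<open>multiply numerator and denominator by the conjugate of the denominator\<close>
  define conj where "conj = (y - x * s) - x * ?t"
  define norm where "norm = y * y - x * y * s - x * x * u"
  have norm_eq: "(x * ?t + y) * conj = norm"
    by (simp add: conj_def norm_def u_def algebra_simps power2_eq_square)
  have "norm \<noteq> 0"
  proof
    assume "norm = 0"
    with norm_eq denom have "x * ?t = y - x * s" by (simp add: conj_def)
    with denom have "x \<noteq> 0" "?t = (y - x * s) / x" by (auto simp: field_simps)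
    moreover have "(y - x * s) / x \<in> K" using q s by (simp add: closed)
    ultimately show False using t by simp
  qed
  have "r = (x1 * ?t + y1) * conj / norm"
    using r denom \<open>norm \<noteq> 0\<close> by (simp flip: norm_eq p(3) q(3) add: eq_fract)
  also have "(x1 * ?t + y1) * conj = (x1 * y - y1 * x) * ?t + (y1 * y - y1 * x * s - x1 * x * u)"
    by (simp add: conj_def u_def algebra_simps power2_eq_square)
  also have "\<dots> / norm = ((x1 * y - y1 * x) / norm) * ?t + (y1 * y - y1 * x * s - x1 * x * u) / norm"
    by (simp add: add_divide_distrib)
  finally show ?thesis
    using p q s u unfolding norm_def u_def[symmetric] by (blast intro: closed)
qed

lemma dimension_two_if_linear_span:
  fixes K :: "'a::field set"
  assumes "subfield K ring_of_type_algebra" "t \<notin> K" "\<And>r. \<exists>x\<in>K. \<exists>y\<in>K. r = x * t + y"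
  shows "ring.dimension ring_of_type_algebra 2 K (carrier ring_of_type_algebra)"
proof -
  interpret field "ring_of_type_algebra :: 'a ring" by rule
  have "line_extension K t K = carrier ring_of_type_algebra"
    using assms(3) by (auto simp: line_extension_mem_iff ring_of_type_algebra_simps)
  moreover have "dimension (Suc 1) K (line_extension K t K)"
    using assms(2) dimension_one[OF assms(1)]
    by (intro Suc_dim) (auto simp: ring_of_type_algebra_simps)
  ultimately show ?thesis by (simp add: numeral_2_eq_2)
qed

lemma Fract_same_axis_quadratics_not_square:
  fixes a \<beta> c d f :: "'a::field_char_0" and y :: "'a ratfun"
  assumes "a \<noteq> 0" "d \<noteq> 0" "a * f \<noteq> c * d"
  shows "y ^ 2 \<noteq> Fract [:c, a * \<beta>, a:] [:f, d * \<beta>, d:]"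
proof
  assume "y ^ 2 = Fract [:c, a * \<beta>, a:] [:f, d * \<beta>, d:]"
  with \<open>d \<noteq> 0\<close> obtain W where "W ^ 2 = [:c, a * \<beta>, a:] * [:f, d * \<beta>, d:]"
    using ratfun_square_eq_Fract_imp_poly_square by fastforce
  with quadratics_same_axis_product_not_square[OF assms] show False by blast
qed

lemma subfield_gen_same_axis_quadratics_dimension:
  fixes a \<beta> c d f :: "'a::field_char_0"
  defines "m \<equiv> Fract [:c, a * \<beta>, a:] [:f, d * \<beta>, d:]"
  assumes "[:f, d * \<beta>, d:] \<noteq> 0" "a * f \<noteq> c * d"
  shows "ring.dimension ratfun_ring 2 (subfield_gen m) (carrier ratfun_ring)"
proof -
  let ?t = "ratfun_var :: 'a ratfun"
  define u where "u = ?t ^ 2 + ratfun_const \<beta> * ?t"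
  have num: "ratfun_const a * u + ratfun_const c = Fract [:c, a * \<beta>, a:] 1"
    and den: "ratfun_const d * u + ratfun_const f = Fract [:f, d * \<beta>, d:] 1"
    by (simp_all add: u_def ratfun_const_mult algebra_simps flip: ratfun_quadratic_eq_Fract)
  have den_nonzero: "ratfun_const d * u + ratfun_const f \<noteq> 0"
    using assms(2) by (simp add: den Zero_fract_def eq_fract)
  have "m = (ratfun_const a * u + ratfun_const c) / (ratfun_const d * u + ratfun_const f)"
    using assms(2) by (simp add: m_def num den)
  then have "u \<in> subfield_gen m"
    using den_nonzero assms(3) by (rule linear_fractional_in_subfield_gen)
  have "m \<in> ratfun_fixed [:- \<beta>, - 1:]"
    unfolding ratfun_fixed_def m_def using assms(2)
    by (intro CollectI exI[of _ "[:c, a * \<beta>, a:]"] exI[of _ "[:f, d * \<beta>, d:]"])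
       (simp add: pcompose_quadratic_reflection)
  then have "?t \<notin> subfield_gen m"
    using ratfun_var_notin_ratfun_fixed[of "[:- \<beta>, - 1:]"]
    by (auto dest: subfield_gen_subset_ratfun_fixed)
  moreover from \<open>u \<in> subfield_gen m\<close> \<open>?t \<notin> subfield_gen m\<close>
  have "\<exists>x\<in>subfield_gen m. \<exists>y\<in>subfield_gen m. r = x * ?t + y" for r
    unfolding u_def
    by (intro ratfun_in_linear_span[OF subfield_subfield_gen]) (auto simp: subfield_gen_incl)
  ultimately show ?thesis
    by (rule dimension_two_if_linear_span[OF subfield_subfield_gen])
qed

theorem lemma2p4:
  fixes a b c d e f :: "'a::field_char_0"
  defines "t \<equiv> (ratfun_var :: 'a ratfun)"
  defines "m \<equiv> (ratfun_const a * t ^ 2 + ratfun_const b * t + ratfun_const c) /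
                (ratfun_const d * t ^ 2 + ratfun_const e * t + ratfun_const f)"
  assumes "a \<noteq> 0 \<or> d \<noteq> 0"
    and "a * e = b * d"
    and "a * f \<noteq> c * d"
    and "b ^ 2 \<noteq> 4 * a * c"
    and "e ^ 2 \<noteq> 4 * d * f"
  shows "ring.dimension ratfun_ring 2 (subfield_gen m) (carrier ratfun_ring)
         \<and> \<not> (\<exists>y :: 'a ratfun. y ^ 2 = m)"
proof -
  \<comment> \<open>the discriminant hypotheses only serve to exclude \<open>a = 0\<close> and \<open>d = 0\<close>\<close>
  have "a \<noteq> 0" "d \<noteq> 0" using assms(3-7) by auto
  define \<beta> where "\<beta> = b / a"
  have b: "b = a * \<beta>" and e: "e = d * \<beta>"
    using \<open>a \<noteq> 0\<close> assms(4) by (simp_all add: \<beta>_def field_simps)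
  have "m = Fract [:c, a * \<beta>, a:] [:f, d * \<beta>, d:]"
    using \<open>d \<noteq> 0\<close> by (simp add: m_def t_def b e ratfun_quadratic_eq_Fract)
  moreover have "[:f, d * \<beta>, d:] \<noteq> 0" using \<open>d \<noteq> 0\<close> by simp
  ultimately show ?thesis
    using subfield_gen_same_axis_quadratics_dimension assms(5)
      Fract_same_axis_quadratics_not_square[OF \<open>a \<noteq> 0\<close> \<open>d \<noteq> 0\<close> assms(5)]
    by metis
qed

end
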